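(* Let $f\in C^2(r_{\mathcal{C}},\infty)$ with $f(r)>0$ for all $r>r_{\mathcal{C}}$, and let $X=f(r)\partial_r$. Then for every (sufficiently regular) function $\psi$ on the expanding region of Schwarzschild–de Sitter, $$\square_g(X\psi)=X(\square_g\psi)+\frac{f^2}{r^2}\partial_r\Big(\frac{r^2\phi^{-2}}{f^2}\Big)\partial_r(X\psi)+\frac{f^2}{r^2}\partial_r^2\Big(\frac{r^2\phi^{-2}}{f}\Big)\partial_r\psi+2f\phi^4\Big(\frac1r-\frac{3m}{r^2}\Big)\partial_t^2\psi+\frac{2f}{r}\square_g\psi.$$
   Context: Fix $\Lambda>0$, $0<3m<1/\sqrt\Lambda$; $D(r)=\frac{\Lambda}{3}r^2-1+\frac{2m}{r}$, $r_{\mathcal{C}}$ its largest positive root; expanding region $(r_{\mathcal{C}},\infty)_r\times\mathbb{R}_t\times\mathbb{S}^2$ with $g=-D^{-1}dr^2+Ddt^2+r^2\gamma_{\mathbb{S}^2}$, lapse $\phi=D^{-1/2}$, and $\square_g\psi=\phi^2\partial_t^2\psi-r^{-2}\partial_r(r^2\phi^{-2}\partial_r\psi)+r^{-2}\Delta_{\mathbb{S}^2}\psi$. *)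

theory Defs
  imports "HOL-Analysis.Analysis"
begin

definition D_sds :: "real \<Rightarrow> real \<Rightarrow> real \<Rightarrow> real" where
  "D_sds \<Lambda> m r = \<Lambda> / 3 * r ^ 2 - 1 + 2 * m / r"

definition r_C :: "real \<Rightarrow> real \<Rightarrow> real" where
  "r_C \<Lambda> m = Max {r. 0 < r \<and> D_sds \<Lambda> m r = 0}"

text \<open>C^k on a set (for open sets): iterated Frechet derivatives in every direction
  exist and are continuous.\<close>
fun Ck :: "nat \<Rightarrow> 'a::real_normed_vector set \<Rightarrow> ('a \<Rightarrow> real) \<Rightarrow> bool" where
  "Ck 0 S g = continuous_on S g"
| "Ck (Suc k) S g = (g differentiable_on S \<and> continuous_on S g \<and>
      (\<forall>v. Ck k S (\<lambda>x. frechet_derivative g (at x) v)))"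

text \<open>Coordinates p = (r, t, theta, phi) on the expanding region, with (theta, phi)
  standard polar coordinates on the sphere.\<close>
type_synonym pt = "real \<times> real \<times> real \<times> real"

definition e_r :: pt where "e_r = (1, 0, 0, 0)"
definition e_t :: pt where "e_t = (0, 1, 0, 0)"
definition e_th :: pt where "e_th = (0, 0, 1, 0)"
definition e_ph :: pt where "e_ph = (0, 0, 0, 1)"

definition pd :: "pt \<Rightarrow> (pt \<Rightarrow> real) \<Rightarrow> pt \<Rightarrow> real" where
  "pd v g p = frechet_derivative g (at p) v"

definition rad :: "pt \<Rightarrow> real" where "rad p = fst p"
definition theta :: "pt \<Rightarrow> real" where "theta p = fst (snd (snd p))"

definition lap_S2 :: "(pt \<Rightarrow> real) \<Rightarrow> pt \<Rightarrow> real" where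
  "lap_S2 g p = 1 / sin (theta p) * pd e_th (\<lambda>q. sin (theta q) * pd e_th g q) p
               + 1 / (sin (theta p))^2 * pd e_ph (pd e_ph g) p"

text \<open>Wave operator, with lapse phi = D^(-1/2), so phi^2 = 1/D and phi^(-2) = D:
  box psi = phi^2 dt^2 psi - r^-2 dr(r^2 phi^-2 dr psi) + r^-2 Lap_S2 psi.\<close>
definition box_g :: "real \<Rightarrow> real \<Rightarrow> (pt \<Rightarrow> real) \<Rightarrow> pt \<Rightarrow> real" where
  "box_g \<Lambda> m g p =
     1 / D_sds \<Lambda> m (rad p) * pd e_t (pd e_t g) p
     - 1 / (rad p)^2 * pd e_r (\<lambda>q. (rad q)^2 * D_sds \<Lambda> m (rad q) * pd e_r g q) p
     + 1 / (rad p)^2 * lap_S2 g p"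

definition expanding_region :: "real \<Rightarrow> real \<Rightarrow> pt set" where
  "expanding_region \<Lambda> m = {r_C \<Lambda> m<..} \<times> UNIV \<times> {0<..<pi} \<times> UNIV"

end

(* Write X = f(r) d_r. Its coefficient depends on r only and it has no t- or angular component,
   so X commutes with d_t^2 and with the Laplacian of the round sphere; by the symmetry of third
   partial derivatives of a C^3 function, so does d_r. Expanding box_g (X psi) and X (box_g psi)
   therefore produces the same terms in d_t^2 d_r psi and in the spherical Laplacian of d_r psi, and
   the identity reduces to comparing the coefficients of d_r psi, d_r^2 psi, d_r^3 psi, d_t^2 psi
   and of the spherical Laplacian of psi, which are explicit in f, D and their first two
   derivatives. The radial coefficients agree for an arbitrary weight r^2 D; the coefficient of
   d_t^2 psi agrees because r D' - 2 D = 2 - 6 m / r for the Schwarzschild--de Sitter function D. *)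

theory Submission
  imports Defs "HOL-Computational_Algebra.Polynomial"
begin

section \<open>Partial derivatives along coordinate directions\<close>

lemma pd_eqI:
  assumes "(g has_derivative g') (at p)" "g' v = c"
  shows "pd v g p = c"
  using assms unfolding pd_def by (metis frechet_derivative_at)

lemma pd_has_derivative:
  assumes "g differentiable (at p)"
  shows "(g has_derivative (\<lambda>v. pd v g p)) (at p)"
  using frechet_derivative_works[of g "at p"] assms by (simp add: pd_def)

lemma pd_cong:
  assumes "open S" "p \<in> S" "\<And>q. q \<in> S \<Longrightarrow> g q = h q"
  shows "pd v g p = pd v h p"
proof -
  have "(g has_derivative g') (at p) \<longleftrightarrow> (h has_derivative g') (at p)" for g'
    using assms has_derivative_transform_within_open[of _ _ p UNIV S] by metis
  then show ?thesis unfolding pd_def frechet_derivative_def by simp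
qed

lemma pd_add:
  assumes "g differentiable (at p)" "h differentiable (at p)"
  shows "pd v (\<lambda>x. g x + h x) p = pd v g p + pd v h p"
  using has_derivative_add[OF pd_has_derivative[OF assms(1)] pd_has_derivative[OF assms(2)]]
  by (rule pd_eqI) simp

lemma differentiable_cong_open:
  assumes "open S" "p \<in> S" "\<And>q. q \<in> S \<Longrightarrow> g q = h q" "g differentiable (at p)"
  shows "h differentiable (at p)"
  using assms has_derivative_transform_within_open unfolding differentiable_def by metis

lemma bounded_linear_rad: "bounded_linear rad"
  unfolding rad_def[abs_def] by (rule bounded_linear_fst)

lemma bounded_linear_theta: "bounded_linear theta"
  unfolding theta_def[abs_def]
  by (intro bounded_linear_compose[OF bounded_linear_fst]
      bounded_linear_compose[OF bounded_linear_snd] bounded_linear_snd)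

lemma rad_theta_basis [simp]:
  "rad e_r = 1" "rad e_t = 0" "rad e_th = 0" "rad e_ph = 0"
  "theta e_r = 0" "theta e_t = 0" "theta e_th = 1" "theta e_ph = 0"
  by (simp_all add: rad_def theta_def e_r_def e_t_def e_th_def e_ph_def)

lemma has_derivative_coord_mult:
  fixes c :: "pt \<Rightarrow> real"
  assumes "bounded_linear c" "(k has_real_derivative k') (at (c q))" "(g has_derivative g') (at q)"
  shows "((\<lambda>x. k (c x) * g x) has_derivative (\<lambda>v. k (c q) * g' v + k' * c v * g q)) (at q)"
proof -
  have "((\<lambda>x. k (c x)) has_derivative (\<lambda>v. k' * c v)) (at q)"
    using has_derivative_compose[OF bounded_linear_imp_has_derivative[OF assms(1)]
        assms(2)[unfolded has_field_derivative_def]]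
    by (simp add: o_def)
  from has_derivative_mult[OF this assms(3)] show ?thesis
    by (simp add: algebra_simps)
qed

lemma pd_coord_mult:
  fixes c :: "pt \<Rightarrow> real"
  assumes "bounded_linear c" "(k has_real_derivative k') (at (c q))" "g differentiable (at q)"
  shows "pd v (\<lambda>x. k (c x) * g x) q = k (c q) * pd v g q + k' * c v * g q"
  using has_derivative_coord_mult[OF assms(1,2) pd_has_derivative[OF assms(3)]]
  by (rule pd_eqI) simp

lemma differentiable_coord_mult:
  fixes c g :: "pt \<Rightarrow> real" and k :: "real \<Rightarrow> real"
  assumes "bounded_linear c" "k differentiable (at (c q))" "g differentiable (at q)"
  shows "(\<lambda>x. k (c x) * g x) differentiable (at q)"
proof -
  obtain k' where "(k has_real_derivative k') (at (c q))"
    using assms(2) real_differentiable_def by blast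
  from has_derivative_coord_mult[OF assms(1) this pd_has_derivative[OF assms(3)]] show ?thesis
    unfolding differentiable_def by blast
qed

lemma pd_coord_mult_coord_zero:
  fixes c g :: "pt \<Rightarrow> real" and k :: "real \<Rightarrow> real"
  assumes "bounded_linear c" "k differentiable (at (c q))" "g differentiable (at q)" "c v = 0"
  shows "pd v (\<lambda>x. k (c x) * g x) q = k (c q) * pd v g q"
  using assms(2) pd_coord_mult[OF assms(1) _ assms(3), of k _ v] assms(4)
  unfolding real_differentiable_def by force

lemma Ck_Suc_imp_Ck: "Ck (Suc k) S g \<Longrightarrow> Ck k S g"
proof (induction k arbitrary: g)
  case (Suc k)
  then show ?case by (metis Ck.simps(2))
qed simp

lemma Ck_Suc_differentiable: "Ck (Suc k) S g \<Longrightarrow> open S \<Longrightarrow> x \<in> S \<Longrightarrow> g differentiable (at x)"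
  by (simp add: differentiable_on_eq_differentiable_at)

lemma Ck_Suc_pd:
  assumes "Ck (Suc k) S g"
  shows "Ck k S (pd v g)"
proof -
  have "(\<lambda>x. frechet_derivative g (at x) v) = pd v g"
    by (simp add: pd_def fun_eq_iff)
  then show ?thesis
    using assms by (metis Ck.simps(2))
qed

lemma Ck2_differentiable:
  assumes "Ck 2 S g" "open S" "x \<in> S"
  shows "g differentiable (at x)" "pd v g differentiable (at x)"
  using assms Ck_Suc_differentiable Ck_Suc_pd unfolding numeral_2_eq_2 by metis+

lemma Ck3_imp_Ck2:
  assumes "Ck 3 S g"
  shows "Ck 2 S g" "Ck 2 S (pd v g)"
  using assms Ck_Suc_imp_Ck Ck_Suc_pd unfolding numeral_3_eq_3 numeral_2_eq_2 by blast+

lemma Ck3_differentiable: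
  assumes "Ck 3 S g" "open S" "x \<in> S"
  shows "g differentiable (at x)" "pd v g differentiable (at x)"
    "pd w (pd v g) differentiable (at x)"
  using Ck2_differentiable[OF Ck3_imp_Ck2(1)[OF assms(1)] assms(2,3)]
    Ck2_differentiable[OF Ck3_imp_Ck2(2)[OF assms(1)] assms(2,3)] by auto

lemma Ck2_isCont_pd2:
  assumes "Ck 2 S g" "open S" "x \<in> S"
  shows "isCont (pd w (pd v g)) x"
  using assms Ck_Suc_pd[of 0 S] Ck_Suc_pd[of 1 S]
  by (simp add: numeral_2_eq_2 continuous_on_eq_continuous_at del: Ck.simps(2))

section \<open>Symmetry of second derivatives\<close>

lemma has_real_derivative_along_line:
  assumes "g differentiable (at (a + s *\<^sub>R v))"
  shows "((\<lambda>s. g (a + s *\<^sub>R v)) has_real_derivative pd v g (a + s *\<^sub>R v)) (at s)"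
proof -
  let ?y = "a + s *\<^sub>R v"
  have "((\<lambda>s. a + s *\<^sub>R v) has_derivative (\<lambda>t. t *\<^sub>R v)) (at s)"
    by (auto intro!: derivative_eq_intros)
  from has_derivative_compose[OF this pd_has_derivative[OF assms]]
  have "((\<lambda>s. g (a + s *\<^sub>R v)) has_derivative (\<lambda>t. pd (t *\<^sub>R v) g ?y)) (at s)"
    by (simp add: o_def)
  moreover have "(\<lambda>t. pd (t *\<^sub>R v) g ?y) = (\<lambda>t. pd v g ?y * t)"
    using linear_scale[OF has_derivative_linear[OF pd_has_derivative[OF assms]]]
    by (simp add: fun_eq_iff)
  ultimately show ?thesis
    by (simp add: has_field_derivative_def)
qed

lemma second_difference_mean_value:
  fixes g :: "pt \<Rightarrow> real"
  assumes S: "open S" and C: "Ck 2 S g" and h: "0 < h"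
    and box: "\<And>s t. 0 \<le> s \<Longrightarrow> s \<le> h \<Longrightarrow> 0 \<le> t \<Longrightarrow> t \<le> h \<Longrightarrow> x + s *\<^sub>R v + t *\<^sub>R w \<in> S"
  obtains \<xi> \<eta> where "0 \<le> \<xi>" "\<xi> \<le> h" "0 \<le> \<eta>" "\<eta> \<le> h"
    "g (x + h *\<^sub>R v + h *\<^sub>R w) - g (x + h *\<^sub>R v) - g (x + h *\<^sub>R w) + g x
       = h * h * pd w (pd v g) (x + \<xi> *\<^sub>R v + \<eta> *\<^sub>R w)"
proof -
  define \<Delta> where "\<Delta> s = g (x + h *\<^sub>R w + s *\<^sub>R v) - g (x + s *\<^sub>R v)" for s
  have "\<exists>\<xi>>0. \<xi> < h \<and> \<Delta> h - \<Delta> 0 = (h - 0) *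
          (pd v g (x + h *\<^sub>R w + \<xi> *\<^sub>R v) - pd v g (x + \<xi> *\<^sub>R v))"
  proof (rule MVT2[OF h])
    fix s assume s: "0 \<le> s" "s \<le> h"
    have "x + h *\<^sub>R w + s *\<^sub>R v \<in> S" "x + s *\<^sub>R v \<in> S"
      using box[OF s, of h] box[OF s, of 0] h by (simp_all add: algebra_simps)
    then show "(\<Delta> has_real_derivative
        pd v g (x + h *\<^sub>R w + s *\<^sub>R v) - pd v g (x + s *\<^sub>R v)) (at s)"
      unfolding \<Delta>_def
      by (intro DERIV_diff has_real_derivative_along_line Ck2_differentiable[OF C S])
  qed
  then obtain \<xi> where \<xi>: "0 < \<xi>" "\<xi> < h" and eq1: "\<Delta> h - \<Delta> 0 =
      h * (pd v g (x + h *\<^sub>R w + \<xi> *\<^sub>R v) - pd v g (x + \<xi> *\<^sub>R v))"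
    by auto
  have "\<exists>\<eta>>0. \<eta> < h \<and>
      pd v g (x + \<xi> *\<^sub>R v + h *\<^sub>R w) - pd v g (x + \<xi> *\<^sub>R v + 0 *\<^sub>R w)
        = (h - 0) * pd w (pd v g) (x + \<xi> *\<^sub>R v + \<eta> *\<^sub>R w)"
  proof (rule MVT2[OF h])
    fix t assume "0 \<le> t" "t \<le> h"
    then show "((\<lambda>t. pd v g (x + \<xi> *\<^sub>R v + t *\<^sub>R w)) has_real_derivative
        pd w (pd v g) (x + \<xi> *\<^sub>R v + t *\<^sub>R w)) (at t)"
      using \<xi> by (intro has_real_derivative_along_line Ck2_differentiable[OF C S] box) auto
  qed
  then obtain \<eta> where \<eta>: "0 < \<eta>" "\<eta> < h" and eq2: "pd v g (x + \<xi> *\<^sub>R v + h *\<^sub>R w)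
      - pd v g (x + \<xi> *\<^sub>R v) = h * pd w (pd v g) (x + \<xi> *\<^sub>R v + \<eta> *\<^sub>R w)"
    by auto
  have swap: "x + h *\<^sub>R w + \<xi> *\<^sub>R v = x + \<xi> *\<^sub>R v + h *\<^sub>R w"
    by (simp add: algebra_simps)
  have "g (x + h *\<^sub>R v + h *\<^sub>R w) - g (x + h *\<^sub>R v) - g (x + h *\<^sub>R w) + g x = \<Delta> h - \<Delta> 0"
    by (simp add: \<Delta>_def algebra_simps)
  also have "\<dots> = h * (pd v g (x + \<xi> *\<^sub>R v + h *\<^sub>R w) - pd v g (x + \<xi> *\<^sub>R v))"
    using eq1 by (simp only: swap)
  also have "\<dots> = h * h * pd w (pd v g) (x + \<xi> *\<^sub>R v + \<eta> *\<^sub>R w)"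
    by (simp only: eq2 mult.assoc)
  finally show ?thesis
    using \<xi> \<eta> by (intro that) auto
qed

lemma second_difference_quotient_mean_value:
  fixes g :: "pt \<Rightarrow> real"
  assumes S: "open S" and C: "Ck 2 S g" and h: "0 < h"
    and ball: "cball x (h * (norm v + norm w)) \<subseteq> S"
  obtains y where "dist y x \<le> h * (norm v + norm w)"
    "(g (x + h *\<^sub>R v + h *\<^sub>R w) - g (x + h *\<^sub>R v) - g (x + h *\<^sub>R w) + g x) / h\<^sup>2
       = pd w (pd v g) y"
proof -
  have near: "dist (x + s *\<^sub>R v + t *\<^sub>R w) x \<le> h * (norm v + norm w)"
    if "0 \<le> s" "s \<le> h" "0 \<le> t" "t \<le> h" for s t
  proof -
    have "dist (x + s *\<^sub>R v + t *\<^sub>R w) x \<le> s * norm v + t * norm w"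
      using norm_triangle_ineq[of "s *\<^sub>R v" "t *\<^sub>R w"] that by (simp add: dist_norm)
    also have "\<dots> \<le> h * (norm v + norm w)"
      using that mult_right_mono[of s h "norm v"] mult_right_mono[of t h "norm w"]
      by (simp add: algebra_simps)
    finally show ?thesis .
  qed
  then have "x + s *\<^sub>R v + t *\<^sub>R w \<in> S" if "0 \<le> s" "s \<le> h" "0 \<le> t" "t \<le> h" for s t
    using ball that by (auto simp: dist_commute)
  then obtain \<xi> \<eta> where \<xi>\<eta>: "0 \<le> \<xi>" "\<xi> \<le> h" "0 \<le> \<eta>" "\<eta> \<le> h" and
    eq: "g (x + h *\<^sub>R v + h *\<^sub>R w) - g (x + h *\<^sub>R v) - g (x + h *\<^sub>R w) + g x
       = h * h * pd w (pd v g) (x + \<xi> *\<^sub>R v + \<eta> *\<^sub>R w)"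
    by (rule second_difference_mean_value[OF S C h])
  show ?thesis
  proof (rule that)
    show "dist (x + \<xi> *\<^sub>R v + \<eta> *\<^sub>R w) x \<le> h * (norm v + norm w)"
      using near[OF \<xi>\<eta>] .
    show "(g (x + h *\<^sub>R v + h *\<^sub>R w) - g (x + h *\<^sub>R v) - g (x + h *\<^sub>R w) + g x) / h\<^sup>2
        = pd w (pd v g) (x + \<xi> *\<^sub>R v + \<eta> *\<^sub>R w)"
      unfolding eq using h by (simp add: power2_eq_square)
  qed
qed

lemma second_difference_quotient_tendsto:
  fixes g :: "pt \<Rightarrow> real"
  assumes S: "open S" and C: "Ck 2 S g" and x: "x \<in> S"
  shows "((\<lambda>h. (g (x + h *\<^sub>R v + h *\<^sub>R w) - g (x + h *\<^sub>R v) - g (x + h *\<^sub>R w) + g x) / h\<^sup>2)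
           \<longlongrightarrow> pd w (pd v g) x) (at_right 0)"
proof (rule tendstoI)
  fix e :: real assume "e > 0"
  obtain d where d: "d > 0" "\<And>y. dist y x < d \<Longrightarrow> dist (pd w (pd v g) y) (pd w (pd v g) x) < e"
    using Ck2_isCont_pd2[OF C S x] \<open>e > 0\<close> unfolding continuous_at_eps_delta by blast
  obtain d' where d': "d' > 0" "cball x d' \<subseteq> S"
    using S x open_contains_cball by blast
  have n: "norm v + norm w + 1 > 0"
    by (simp add: add_nonneg_pos)
  define b where "b = min d d' / (norm v + norm w + 1)"
  have "b > 0"
    using d d' n by (simp add: b_def)
  have small: "h * (norm v + norm w) < min d d'" if "0 < h" "h < b" for h
  proof -
    have "h * (norm v + norm w) \<le> h * (norm v + norm w + 1)"
      using that by simp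
    also have "\<dots> < b * (norm v + norm w + 1)"
      using that n by (intro mult_strict_right_mono)
    also have "\<dots> = min d d'"
      using n by (simp add: b_def)
    finally show ?thesis .
  qed
  show "\<forall>\<^sub>F h in at_right 0. dist ((g (x + h *\<^sub>R v + h *\<^sub>R w) - g (x + h *\<^sub>R v)
      - g (x + h *\<^sub>R w) + g x) / h\<^sup>2) (pd w (pd v g) x) < e"
    unfolding eventually_at_right_field
  proof (intro exI[of _ b] conjI allI impI)
    fix h :: real assume h: "0 < h" "h < b"
    have "cball x (h * (norm v + norm w)) \<subseteq> S"
      using small[OF h] d'(2) subset_cball[of "h * (norm v + norm w)" d' x] by simp
    then obtain y where "dist y x \<le> h * (norm v + norm w)" and
      "(g (x + h *\<^sub>R v + h *\<^sub>R w) - g (x + h *\<^sub>R v) - g (x + h *\<^sub>R w) + g x) / h\<^sup>2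
        = pd w (pd v g) y"
      by (rule second_difference_quotient_mean_value[OF S C h(1)])
    then show "dist ((g (x + h *\<^sub>R v + h *\<^sub>R w) - g (x + h *\<^sub>R v)
        - g (x + h *\<^sub>R w) + g x) / h\<^sup>2) (pd w (pd v g) x) < e"
      using small[OF h] d(2)[of y] by simp
  qed (rule \<open>b > 0\<close>)
qed

text \<open>Both iterated derivatives are limits of the same symmetric second difference quotient.\<close>

lemma pd_commute:
  fixes g :: "pt \<Rightarrow> real"
  assumes "open S" "Ck 2 S g" "x \<in> S"
  shows "pd v (pd w g) x = pd w (pd v g) x"
proof -
  have "(\<lambda>h. (g (x + h *\<^sub>R w + h *\<^sub>R v) - g (x + h *\<^sub>R w) - g (x + h *\<^sub>R v) + g x) / h\<^sup>2)
      = (\<lambda>h. (g (x + h *\<^sub>R v + h *\<^sub>R w) - g (x + h *\<^sub>R v) - g (x + h *\<^sub>R w) + g x) / h\<^sup>2)"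
    by (simp add: algebra_simps)
  with second_difference_quotient_tendsto[OF assms, of w v]
  have "((\<lambda>h. (g (x + h *\<^sub>R v + h *\<^sub>R w) - g (x + h *\<^sub>R v) - g (x + h *\<^sub>R w) + g x) / h\<^sup>2)
           \<longlongrightarrow> pd v (pd w g) x) (at_right 0)"
    by simp
  from tendsto_unique[OF trivial_limit_at_right_real this
      second_difference_quotient_tendsto[OF assms, of v w]]
  show ?thesis .
qed

lemma pd_commute3:
  fixes g :: "pt \<Rightarrow> real"
  assumes "open S" "Ck 3 S g" "x \<in> S"
  shows "pd u (pd v (pd w g)) x = pd v (pd w (pd u g)) x"
proof -
  have "pd u (pd v (pd w g)) x = pd v (pd u (pd w g)) x"
    using pd_commute[OF assms(1) Ck3_imp_Ck2(2)[OF assms(2)] assms(3)] .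
  also have "\<dots> = pd v (pd w (pd u g)) x"
    using pd_commute[OF assms(1) Ck3_imp_Ck2(1)[OF assms(2)]] by (intro pd_cong[OF assms(1,3)])
  finally show ?thesis .
qed

section \<open>Real functions of the radius\<close>

lemma Ck2_real_derivatives:
  fixes f :: "real \<Rightarrow> real"
  assumes C: "Ck 2 T f" and T: "open T" and x: "x \<in> T"
  shows "(f has_real_derivative deriv f x) (at x)"
    "(deriv f has_real_derivative deriv (deriv f) x) (at x)"
proof -
  have C': "f differentiable_on T" "Ck (Suc 0) T (\<lambda>y. frechet_derivative f (at y) 1)"
    using C unfolding numeral_2_eq_2 Ck.simps(2) by blast+
  have f: "(f has_real_derivative deriv f y) (at y)" if "y \<in> T" for y
    using C'(1) T that
    by (simp add: differentiable_on_eq_differentiable_at DERIV_deriv_iff_real_differentiable)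
  then show "(f has_real_derivative deriv f x) (at x)"
    using x .
  have "frechet_derivative f (at y) 1 = deriv f y" if "y \<in> T" for y
    using frechet_derivative_at[OF f[OF that, unfolded has_field_derivative_def], symmetric] by simp
  moreover have "((\<lambda>y. frechet_derivative f (at y) 1) has_real_derivative
      deriv (\<lambda>y. frechet_derivative f (at y) 1) x) (at x)"
    using C'(2) T x
    by (simp add: differentiable_on_eq_differentiable_at DERIV_deriv_iff_real_differentiable)
  ultimately have "(deriv f has_real_derivative deriv (\<lambda>y. frechet_derivative f (at y) 1) x) (at x)"
    using has_field_derivative_transform_within_open[OF _ T x] by blast
  then show "(deriv f has_real_derivative deriv (deriv f) x) (at x)"
    by (simp only: DERIV_imp_deriv)
qed

lemma deriv2_divide:
  fixes u v u' v' :: "real \<Rightarrow> real"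
  assumes T: "open T" "x \<in> T"
    and u: "\<And>s. s \<in> T \<Longrightarrow> (u has_real_derivative u' s) (at s)"
    and v: "\<And>s. s \<in> T \<Longrightarrow> (v has_real_derivative v' s) (at s)"
    and v0: "\<And>s. s \<in> T \<Longrightarrow> v s \<noteq> 0"
    and u': "(u' has_real_derivative u'') (at x)" and v': "(v' has_real_derivative v'') (at x)"
  shows "deriv (deriv (\<lambda>s. u s / v s)) x
    = (u'' * v x - u x * v'') / (v x)\<^sup>2 - 2 * v' x * (u' x * v x - u x * v' x) / (v x)^3"
proof -
  have "(u' s * v s - u s * v' s) / (v s)\<^sup>2 = deriv (\<lambda>s. u s / v s) s" if "s \<in> T" for s
    using u[OF that] v[OF that] v0[OF that]
    by (intro DERIV_imp_deriv[symmetric]) (auto intro!: derivative_eq_intros simp: power2_eq_square)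
  moreover have "((\<lambda>s. (u' s * v s - u s * v' s) / (v s)\<^sup>2) has_real_derivative
      (u'' * v x - u x * v'') / (v x)\<^sup>2 - 2 * v' x * (u' x * v x - u x * v' x) / (v x)^3) (at x)"
    using u[OF T(2)] v[OF T(2)] v0[OF T(2)] u' v'
    by (auto intro!: derivative_eq_intros simp: field_simps power2_eq_square power3_eq_cube)
  ultimately show ?thesis
    using has_field_derivative_transform_within_open[OF _ T] DERIV_imp_deriv by blast
qed

lemma D_sds_root_exists:
  assumes L: "\<Lambda> > 0" and m: "0 < 3 * m" "3 * m < 1 / sqrt \<Lambda>"
  obtains r where "0 < r" "D_sds \<Lambda> m r = 0"
proof -
  define s where "s = sqrt \<Lambda>"
  have s: "s > 0" "s * s = \<Lambda>"
    using L by (auto simp: s_def)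
  have "D_sds \<Lambda> m (1 / s) = 2 * m * s - 2 / 3" "D_sds \<Lambda> m (3 / s) = 2 + 2 * m * s / 3"
    using s unfolding D_sds_def by (simp_all add: field_simps power2_eq_square flip: s(2))
  moreover have "3 * m * s < 1"
    using m(2) s by (simp add: s_def field_simps)
  ultimately have "D_sds \<Lambda> m (1 / s) \<le> 0" "0 \<le> D_sds \<Lambda> m (3 / s)"
    using m(1) s by (simp_all add: zero_le_mult_iff)
  moreover have "continuous_on {1 / s..3 / s} (D_sds \<Lambda> m)"
    using s unfolding D_sds_def by (intro continuous_intros) auto
  ultimately obtain r where r: "1 / s \<le> r" "D_sds \<Lambda> m r = 0"
    using IVT'[of "D_sds \<Lambda> m" "1 / s" 0 "3 / s"] s by (auto simp: divide_right_mono)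
  moreover have "0 < 1 / s"
    using s by simp
  ultimately show ?thesis
    using that[of r] by linarith
qed

lemma D_sds_positive_roots_finite:
  assumes "\<Lambda> \<noteq> 0"
  shows "finite {r. 0 < r \<and> D_sds \<Lambda> m r = 0}"
proof (rule finite_subset)
  show "finite {r. poly [:2 * m, -1, 0, \<Lambda> / 3:] r = 0}"
    using assms by (intro poly_roots_finite) simp
  show "{r. 0 < r \<and> D_sds \<Lambda> m r = 0} \<subseteq> {r. poly [:2 * m, -1, 0, \<Lambda> / 3:] r = 0}"
  proof safe
    fix r :: real assume "0 < r" "D_sds \<Lambda> m r = 0"
    then have "r * D_sds \<Lambda> m r = 0"
      by simp
    with \<open>0 < r\<close> show "poly [:2 * m, -1, 0, \<Lambda> / 3:] r = 0"
      by (simp add: D_sds_def algebra_simps power2_eq_square)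
  qed
qed

lemma
  assumes "\<Lambda> > 0" "0 < 3 * m" "3 * m < 1 / sqrt \<Lambda>"
  shows r_C_pos: "0 < r_C \<Lambda> m"
    and D_sds_nonzero_beyond_r_C: "r_C \<Lambda> m < r \<Longrightarrow> D_sds \<Lambda> m r \<noteq> 0"
proof -
  have fin: "finite {r. 0 < r \<and> D_sds \<Lambda> m r = 0}"
    using assms(1) by (intro D_sds_positive_roots_finite) simp
  obtain x where x: "0 < x" "D_sds \<Lambda> m x = 0"
    using D_sds_root_exists[OF assms] .
  then have "x \<le> r_C \<Lambda> m"
    unfolding r_C_def using fin by (intro Max_ge) auto
  then show "0 < r_C \<Lambda> m"
    using x by linarith
  assume "r_C \<Lambda> m < r"
  then show "D_sds \<Lambda> m r \<noteq> 0"
    using Max_ge[OF fin, of r] \<open>x \<le> r_C \<Lambda> m\<close> x unfolding r_C_def by force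
qed

lemma D_sds_has_derivative:
  "r \<noteq> 0 \<Longrightarrow> (D_sds \<Lambda> m has_real_derivative 2 * \<Lambda> * r / 3 - 2 * m / r\<^sup>2) (at r)"
  unfolding D_sds_def[abs_def]
  by (auto intro!: derivative_eq_intros simp: field_simps power2_eq_square)

lemma deriv_D_sds:
  assumes "r \<noteq> 0"
  shows "deriv (D_sds \<Lambda> m) r = 2 * (D_sds \<Lambda> m r + 1) / r - 6 * m / r\<^sup>2"
proof -
  have "deriv (D_sds \<Lambda> m) r = 2 * \<Lambda> * r / 3 - 2 * m / r\<^sup>2"
    by (rule DERIV_imp_deriv[OF D_sds_has_derivative[OF assms]])
  also have "\<dots> = 2 * (D_sds \<Lambda> m r + 1) / r - 6 * m / r\<^sup>2"
    using assms by (simp add: D_sds_def field_simps power2_eq_square)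
  finally show ?thesis .
qed

lemma D_sds_real_derivatives:
  assumes "r \<noteq> 0"
  shows "(D_sds \<Lambda> m has_real_derivative deriv (D_sds \<Lambda> m) r) (at r)"
    "(deriv (D_sds \<Lambda> m) has_real_derivative deriv (deriv (D_sds \<Lambda> m)) r) (at r)"
proof -
  show "(D_sds \<Lambda> m has_real_derivative deriv (D_sds \<Lambda> m) r) (at r)"
    using D_sds_has_derivative[OF assms] DERIV_imp_deriv by metis
  have "((\<lambda>s. 2 * \<Lambda> * s / 3 - 2 * m / s\<^sup>2) has_real_derivative 2 * \<Lambda> / 3 + 4 * m / r ^ 3) (at r)"
    using assms
    by (auto intro!: derivative_eq_intros simp: field_simps power2_eq_square power3_eq_cube)
  then have "(deriv (D_sds \<Lambda> m) has_real_derivative 2 * \<Lambda> / 3 + 4 * m / r ^ 3) (at r)"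
    by (rule has_field_derivative_transform_within_open[where S = "- {0}"])
      (use assms DERIV_imp_deriv[OF D_sds_has_derivative] in auto)
  then show "(deriv (D_sds \<Lambda> m) has_real_derivative deriv (deriv (D_sds \<Lambda> m)) r) (at r)"
    using DERIV_imp_deriv by metis
qed

lemma deriv_r2_D_sds_div_sq:
  fixes f :: "real \<Rightarrow> real" and \<Lambda> m :: real
  assumes "r \<noteq> 0" "(f has_real_derivative deriv f r) (at r)" "f r \<noteq> 0"
  defines "D \<equiv> D_sds \<Lambda> m"
  shows "deriv (\<lambda>s. s\<^sup>2 * D s / (f s)\<^sup>2) r
    = ((2 * r * D r + r\<^sup>2 * deriv D r) * (f r)\<^sup>2 - r\<^sup>2 * D r * (2 * f r * deriv f r))
      / ((f r)\<^sup>2)\<^sup>2"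
  using assms D_sds_real_derivatives(1)[OF assms(1), of \<Lambda> m] unfolding D_def
  by (intro DERIV_imp_deriv) (auto intro!: derivative_eq_intros)

lemma deriv2_r2_D_sds_div:
  fixes f :: "real \<Rightarrow> real" and \<Lambda> m :: real
  assumes a: "0 \<le> a" "a < r" and f: "Ck 2 {a<..} f" "\<forall>s>a. f s \<noteq> 0"
  defines "D \<equiv> D_sds \<Lambda> m"
  shows "deriv (deriv (\<lambda>s. s\<^sup>2 * D s / f s)) r
    = ((2 * D r + 4 * r * deriv D r + r\<^sup>2 * deriv (deriv D) r) * f r
        - r\<^sup>2 * D r * deriv (deriv f) r) / (f r)\<^sup>2
      - 2 * deriv f r * ((2 * r * D r + r\<^sup>2 * deriv D r) * f r - r\<^sup>2 * D r * deriv f r)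
        / (f r) ^ 3"
proof (rule deriv2_divide[OF open_greaterThan])
  have Dd: "(D has_real_derivative deriv D s) (at s)"
    "(deriv D has_real_derivative deriv (deriv D) s) (at s)" if "a < s" for s
    using D_sds_real_derivatives[of s] that a(1) unfolding D_def by auto
  show "((\<lambda>s. s\<^sup>2 * D s) has_real_derivative 2 * s * D s + s\<^sup>2 * deriv D s) (at s)"
    if "s \<in> {a<..}" for s
    using Dd(1) that by (auto intro!: derivative_eq_intros)
  show "((\<lambda>s. 2 * s * D s + s\<^sup>2 * deriv D s) has_real_derivative
      2 * D r + 4 * r * deriv D r + r\<^sup>2 * deriv (deriv D) r) (at r)"
    using Dd[OF a(2)] by (auto intro!: derivative_eq_intros simp: algebra_simps)
qed (use a(2) f Ck2_real_derivatives[OF f(1) open_greaterThan] in auto)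

lemma one_div_sqrt_pow4: "(1 / sqrt x) ^ 4 = 1 / x\<^sup>2"
proof -
  have "sqrt x ^ 4 = (sqrt x * sqrt x)\<^sup>2"
    by (simp flip: power2_eq_square power_mult)
  then show ?thesis
    by (simp add: power_one_over)
qed

section \<open>The wave operator\<close>

lemma open_expanding_region: "open (expanding_region \<Lambda> m)"
  unfolding expanding_region_def
  by (intro open_Times open_greaterThan open_UNIV open_greaterThanLessThan)

lemma expanding_region_coords:
  assumes "q \<in> expanding_region \<Lambda> m"
  shows "r_C \<Lambda> m < rad q" "0 < sin (theta q)"
  using assms sin_gt_zero by (auto simp: expanding_region_def rad_def theta_def)

lemma pd2_rad_mult:
  fixes k :: "real \<Rightarrow> real" and g :: "pt \<Rightarrow> real"
  assumes S: "open S" "p \<in> S" and g: "Ck 2 S g"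
    and k: "\<forall>q\<in>S. k differentiable (at (rad q))"
    and "rad v = 0" "rad w = 0"
  shows "pd w (pd v (\<lambda>q. k (rad q) * g q)) p = k (rad p) * pd w (pd v g) p"
proof -
  note kd = bspec[OF k]
  have "pd w (pd v (\<lambda>q. k (rad q) * g q)) p = pd w (\<lambda>q. k (rad q) * pd v g q) p"
    by (rule pd_cong[OF S])
      (simp add: pd_coord_mult_coord_zero[OF bounded_linear_rad kd Ck2_differentiable(1)[OF g S(1)]]
        \<open>rad v = 0\<close>)
  also have "\<dots> = k (rad p) * pd w (pd v g) p"
    using pd_coord_mult_coord_zero[OF bounded_linear_rad kd[OF S(2)] Ck2_differentiable(2)[OF g S]]
      \<open>rad w = 0\<close> .
  finally show ?thesis .
qed

lemma lap_S2_rad_mult: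
  fixes k :: "real \<Rightarrow> real" and g :: "pt \<Rightarrow> real"
  assumes S: "open S" "p \<in> S" and g: "Ck 2 S g"
    and k: "\<forall>q\<in>S. k differentiable (at (rad q))"
  shows "lap_S2 (\<lambda>q. k (rad q) * g q) p = k (rad p) * lap_S2 g p"
proof -
  note kd = bspec[OF k]
  have sin: "sin differentiable (at (theta p))"
    using DERIV_sin real_differentiable_def by blast
  have "pd e_th (\<lambda>q. sin (theta q) * pd e_th (\<lambda>q. k (rad q) * g q) q) p
      = pd e_th (\<lambda>q. k (rad q) * (sin (theta q) * pd e_th g q)) p"
    by (rule pd_cong[OF S])
      (simp add: pd_coord_mult_coord_zero[OF bounded_linear_rad kd Ck2_differentiable(1)[OF g S(1)]]
        mult.left_commute)
  also have "\<dots> = k (rad p) * pd e_th (\<lambda>q. sin (theta q) * pd e_th g q) p"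
    using pd_coord_mult_coord_zero[OF bounded_linear_rad kd[OF S(2)]
        differentiable_coord_mult[OF bounded_linear_theta sin Ck2_differentiable(2)[OF g S]]]
    by simp
  finally show ?thesis
    using pd2_rad_mult[OF S g k, of e_ph e_ph] unfolding lap_S2_def by (simp add: algebra_simps)
qed

lemma lap_S2_eq:
  assumes "pd e_th g differentiable (at q)" "sin (theta q) \<noteq> 0"
  shows "lap_S2 g q = pd e_th (pd e_th g) q + cot (theta q) * pd e_th g q
    + pd e_ph (pd e_ph g) q / (sin (theta q))\<^sup>2"
  using pd_coord_mult[OF bounded_linear_theta DERIV_sin assms(1), of e_th] assms(2)
  unfolding lap_S2_def by (simp add: cot_def field_simps)

lemma
  fixes g :: "pt \<Rightarrow> real"
  assumes S: "open S" "p \<in> S" and g: "Ck 3 S g"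
    and sin: "\<forall>q\<in>S. sin (theta q) \<noteq> 0"
  shows lap_S2_differentiable: "lap_S2 g differentiable (at p)"
    and pd_r_lap_S2: "pd e_r (lap_S2 g) p = lap_S2 (pd e_r g) p"
proof -
  note sin = bspec[OF sin]
  define csc2 :: "real \<Rightarrow> real" where "csc2 s = 1 / (sin s)\<^sup>2" for s
  let ?A = "pd e_th (pd e_th g)"
  let ?B = "\<lambda>q. cot (theta q) * pd e_th g q"
  let ?C = "\<lambda>q. csc2 (theta q) * pd e_ph (pd e_ph g) q"
  have lap: "lap_S2 g q = ?A q + ?B q + ?C q" if "q \<in> S" for q
    using lap_S2_eq[OF Ck3_differentiable(2)[OF g S(1) that] sin[OF that]] by (simp add: csc2_def)
  have cot: "cot differentiable (at (theta p))"
    using DERIV_cot[OF sin[OF S(2)]] real_differentiable_def by blast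
  have csc2: "csc2 differentiable (at (theta p))"
    using sin[OF S(2)] unfolding real_differentiable_def csc2_def
    by (auto intro!: derivative_eq_intros)
  have dA: "?A differentiable (at p)"
    using Ck3_differentiable(3)[OF g S] .
  have dB: "?B differentiable (at p)"
    using differentiable_coord_mult[OF bounded_linear_theta cot Ck3_differentiable(2)[OF g S]] .
  have dC: "?C differentiable (at p)"
    using differentiable_coord_mult[OF bounded_linear_theta csc2 Ck3_differentiable(3)[OF g S]] .
  have dL: "(\<lambda>q. ?A q + ?B q + ?C q) differentiable (at p)"
    by (intro differentiable_add dA dB dC)
  show "lap_S2 g differentiable (at p)"
    by (rule differentiable_cong_open[OF S _ dL]) (simp add: lap)
  have "pd e_r (lap_S2 g) p = pd e_r (\<lambda>q. ?A q + ?B q + ?C q) p"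
    by (rule pd_cong[OF S]) (simp add: lap)
  also have "\<dots> = pd e_r ?A p + cot (theta p) * pd e_r (pd e_th g) p
      + csc2 (theta p) * pd e_r (pd e_ph (pd e_ph g)) p"
    using pd_add[OF differentiable_add[OF dA dB] dC] pd_add[OF dA dB]
      pd_coord_mult_coord_zero[OF bounded_linear_theta cot Ck3_differentiable(2)[OF g S]]
      pd_coord_mult_coord_zero[OF bounded_linear_theta csc2 Ck3_differentiable(3)[OF g S]]
    by simp
  also have "\<dots> = lap_S2 (pd e_r g) p"
    using lap_S2_eq[OF Ck3_differentiable(3)[OF g S] sin[OF S(2)]]
      pd_commute3[OF S(1) g S(2), of e_r e_th e_th] pd_commute3[OF S(1) g S(2), of e_r e_ph e_ph]
      pd_commute[OF S(1) Ck3_imp_Ck2(1)[OF g] S(2), of e_r e_th]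
    by (simp add: csc2_def)
  finally show "pd e_r (lap_S2 g) p = lap_S2 (pd e_r g) p" .
qed

lemma box_g_eq:
  fixes g :: "pt \<Rightarrow> real"
  assumes "pd e_r g differentiable (at q)" "rad q \<noteq> 0"
  shows "box_g \<Lambda> m g q = pd e_t (pd e_t g) q / D_sds \<Lambda> m (rad q)
      - D_sds \<Lambda> m (rad q) * pd e_r (pd e_r g) q
      - (2 * D_sds \<Lambda> m (rad q) / rad q + deriv (D_sds \<Lambda> m) (rad q)) * pd e_r g q
      + lap_S2 g q / (rad q)\<^sup>2"
proof -
  have "((\<lambda>s. s\<^sup>2 * D_sds \<Lambda> m s) has_real_derivative
      2 * rad q * D_sds \<Lambda> m (rad q) + (rad q)\<^sup>2 * deriv (D_sds \<Lambda> m) (rad q)) (at (rad q))"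
    using D_sds_real_derivatives(1)[OF assms(2)] by (auto intro!: derivative_eq_intros)
  from pd_coord_mult[OF bounded_linear_rad this assms(1), of e_r] show ?thesis
    using assms(2) unfolding box_g_def by (simp add: field_simps power2_eq_square)
qed

lemma box_g_rad_mult:
  fixes k :: "real \<Rightarrow> real" and \<psi> :: "pt \<Rightarrow> real"
  assumes S: "open S" "p \<in> S" and \<psi>: "Ck 3 S \<psi>" and r: "rad p \<noteq> 0"
    and T: "open T" "rad ` S \<subseteq> T" and kC: "Ck 2 T k"
  shows "box_g \<Lambda> m (\<lambda>q. k (rad q) * pd e_r \<psi> q) p
    = k (rad p) * pd e_t (pd e_t (pd e_r \<psi>)) p / D_sds \<Lambda> m (rad p)
      - D_sds \<Lambda> m (rad p) * (k (rad p) * pd e_r (pd e_r (pd e_r \<psi>)) p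
          + 2 * deriv k (rad p) * pd e_r (pd e_r \<psi>) p + deriv (deriv k) (rad p) * pd e_r \<psi> p)
      - (2 * D_sds \<Lambda> m (rad p) / rad p + deriv (D_sds \<Lambda> m) (rad p))
          * (k (rad p) * pd e_r (pd e_r \<psi>) p + deriv k (rad p) * pd e_r \<psi> p)
      + k (rad p) * lap_S2 (pd e_r \<psi>) p / (rad p)\<^sup>2"
proof -
  let ?X = "\<lambda>q. k (rad q) * pd e_r \<psi> q"
  let ?R1 = "\<lambda>q. k (rad q) * pd e_r (pd e_r \<psi>) q"
  let ?R2 = "\<lambda>q. deriv k (rad q) * pd e_r \<psi> q"
  have k1: "(k has_real_derivative deriv k (rad q)) (at (rad q))" if "q \<in> S" for q
    using Ck2_real_derivatives(1)[OF kC T(1)] T(2) that by blast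
  have k2: "(deriv k has_real_derivative deriv (deriv k) (rad p)) (at (rad p))"
    using Ck2_real_derivatives(2)[OF kC T(1)] T(2) S(2) by blast
  have kd: "\<forall>q\<in>S. k differentiable (at (rad q))"
    using k1 real_differentiable_def by blast
  have Xr: "pd e_r ?X q = ?R1 q + ?R2 q" if "q \<in> S" for q
    using pd_coord_mult[OF bounded_linear_rad k1[OF that] Ck3_differentiable(2)[OF \<psi> S(1) that]]
    by simp
  have dR1: "?R1 differentiable (at p)"
    using differentiable_coord_mult[OF bounded_linear_rad bspec[OF kd S(2)]
        Ck3_differentiable(3)[OF \<psi> S]] .
  have dR2: "?R2 differentiable (at p)"
    using differentiable_coord_mult[OF bounded_linear_rad _ Ck3_differentiable(2)[OF \<psi> S]] k2
      real_differentiable_def by blast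
  have dXr: "pd e_r ?X differentiable (at p)"
    by (rule differentiable_cong_open[OF S _ differentiable_add[OF dR1 dR2]]) (simp add: Xr)
  have "pd e_r (pd e_r ?X) p = pd e_r (\<lambda>q. ?R1 q + ?R2 q) p"
    by (rule pd_cong[OF S]) (simp add: Xr)
  also have "\<dots> = k (rad p) * pd e_r (pd e_r (pd e_r \<psi>)) p
      + 2 * deriv k (rad p) * pd e_r (pd e_r \<psi>) p + deriv (deriv k) (rad p) * pd e_r \<psi> p"
    using pd_add[OF dR1 dR2]
      pd_coord_mult[OF bounded_linear_rad k1[OF S(2)] Ck3_differentiable(3)[OF \<psi> S]]
      pd_coord_mult[OF bounded_linear_rad k2 Ck3_differentiable(2)[OF \<psi> S]]
    by simp
  finally show ?thesis
    using box_g_eq[OF dXr r, of \<Lambda> m] Xr[OF S(2)]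
      pd2_rad_mult[OF S Ck3_imp_Ck2(2)[OF \<psi>] kd, of e_t e_t]
      lap_S2_rad_mult[OF S Ck3_imp_Ck2(2)[OF \<psi>] kd]
    by simp
qed

lemma inverse_D_sds_has_derivative:
  assumes "r \<noteq> 0" "D_sds \<Lambda> m r \<noteq> 0"
  shows "((\<lambda>s. 1 / D_sds \<Lambda> m s) has_real_derivative
    - deriv (D_sds \<Lambda> m) r / (D_sds \<Lambda> m r)\<^sup>2) (at r)"
  using assms D_sds_real_derivatives(1)[OF assms(1)]
  by (auto intro!: derivative_eq_intros simp: power2_eq_square)

lemma box_g_drift_has_derivative:
  assumes "r \<noteq> 0"
  shows "((\<lambda>s. 2 * D_sds \<Lambda> m s / s + deriv (D_sds \<Lambda> m) s) has_real_derivative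
    deriv (deriv (D_sds \<Lambda> m)) r + 2 * deriv (D_sds \<Lambda> m) r / r - 2 * D_sds \<Lambda> m r / r\<^sup>2) (at r)"
  using assms D_sds_real_derivatives[OF assms]
  by (auto intro!: derivative_eq_intros simp: field_simps power2_eq_square)

lemma pd_r_box_g:
  fixes \<psi> :: "pt \<Rightarrow> real"
  assumes S: "open S" "p \<in> S" and \<psi>: "Ck 3 S \<psi>"
    and rad: "\<forall>q\<in>S. rad q \<noteq> 0" and sin: "\<forall>q\<in>S. sin (theta q) \<noteq> 0"
    and D: "D_sds \<Lambda> m (rad p) \<noteq> 0"
  shows "pd e_r (box_g \<Lambda> m \<psi>) p
    = pd e_t (pd e_t (pd e_r \<psi>)) p / D_sds \<Lambda> m (rad p)
      - deriv (D_sds \<Lambda> m) (rad p) / (D_sds \<Lambda> m (rad p))\<^sup>2 * pd e_t (pd e_t \<psi>) p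
      - D_sds \<Lambda> m (rad p) * pd e_r (pd e_r (pd e_r \<psi>)) p
      - 2 * (deriv (D_sds \<Lambda> m) (rad p) + D_sds \<Lambda> m (rad p) / rad p) * pd e_r (pd e_r \<psi>) p
      - (deriv (deriv (D_sds \<Lambda> m)) (rad p) + 2 * deriv (D_sds \<Lambda> m) (rad p) / rad p
          - 2 * D_sds \<Lambda> m (rad p) / (rad p)\<^sup>2) * pd e_r \<psi> p
      + lap_S2 (pd e_r \<psi>) p / (rad p)\<^sup>2 - 2 * lap_S2 \<psi> p / (rad p) ^ 3"
    (is "_ = ?rhs")
proof -
  let ?D = "D_sds \<Lambda> m" and ?r = "rad p"
  define a where "a s = 1 / ?D s" for s
  define b where "b s = - ?D s" for s
  define c where "c s = - (2 * ?D s / s + deriv ?D s)" for s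
  define e :: "real \<Rightarrow> real" where "e s = 1 / s\<^sup>2" for s
  let ?B = "\<lambda>q. a (rad q) * pd e_t (pd e_t \<psi>) q + b (rad q) * pd e_r (pd e_r \<psi>) q
    + c (rad q) * pd e_r \<psi> q + e (rad q) * lap_S2 \<psi> q"
  have box: "box_g \<Lambda> m \<psi> q = ?B q" if "q \<in> S" for q
    using box_g_eq[OF Ck3_differentiable(2)[OF \<psi> S(1) that] bspec[OF rad that], of \<Lambda> m]
    by (simp add: a_def b_def c_def e_def divide_inverse algebra_simps)
  have r: "?r \<noteq> 0"
    using rad S(2) by blast
  have a': "(a has_real_derivative - deriv ?D ?r / (?D ?r)\<^sup>2) (at ?r)"
    unfolding a_def[abs_def] by (rule inverse_D_sds_has_derivative[OF r D])
  have b': "(b has_real_derivative - deriv ?D ?r) (at ?r)"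
    unfolding b_def[abs_def] using D_sds_real_derivatives(1)[OF r]
    by (auto intro!: derivative_eq_intros)
  have c': "(c has_real_derivative
      2 * ?D ?r / ?r\<^sup>2 - (deriv (deriv ?D) ?r + 2 * deriv ?D ?r / ?r)) (at ?r)"
    unfolding c_def[abs_def] using DERIV_minus[OF box_g_drift_has_derivative[OF r]] by simp
  have e': "(e has_real_derivative - 2 / ?r ^ 3) (at ?r)"
    unfolding e_def[abs_def] using r
    by (auto intro!: derivative_eq_intros simp: field_simps power2_eq_square power3_eq_cube)
  have dlap: "lap_S2 \<psi> differentiable (at p)"
    using lap_S2_differentiable[OF S \<psi> sin] .
  have dtt: "pd e_t (pd e_t \<psi>) differentiable (at p)"
    and drr: "pd e_r (pd e_r \<psi>) differentiable (at p)" and dr: "pd e_r \<psi> differentiable (at p)"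
    using Ck3_differentiable[OF \<psi> S] by blast+
  note dcoord = differentiable_coord_mult[OF bounded_linear_rad]
  note pcoord = pd_coord_mult[OF bounded_linear_rad]
  have da: "a differentiable (at ?r)" and db: "b differentiable (at ?r)"
    and dc: "c differentiable (at ?r)" and de: "e differentiable (at ?r)"
    using a' b' c' e' real_differentiable_def by blast+
  have "pd e_r (box_g \<Lambda> m \<psi>) p = pd e_r ?B p"
    by (rule pd_cong[OF S]) (simp add: box)
  also have "\<dots> = a ?r * pd e_r (pd e_t (pd e_t \<psi>)) p
        - deriv ?D ?r / (?D ?r)\<^sup>2 * pd e_t (pd e_t \<psi>) p
      + (b ?r * pd e_r (pd e_r (pd e_r \<psi>)) p - deriv ?D ?r * pd e_r (pd e_r \<psi>) p)
      + (c ?r * pd e_r (pd e_r \<psi>) p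
         + (2 * ?D ?r / ?r\<^sup>2 - (deriv (deriv ?D) ?r + 2 * deriv ?D ?r / ?r)) * pd e_r \<psi> p)
      + (e ?r * pd e_r (lap_S2 \<psi>) p - 2 / ?r ^ 3 * lap_S2 \<psi> p)"
    using pd_add[OF differentiable_add[OF differentiable_add[OF dcoord[OF da dtt] dcoord[OF db drr]]
          dcoord[OF dc dr]] dcoord[OF de dlap]]
      pd_add[OF differentiable_add[OF dcoord[OF da dtt] dcoord[OF db drr]] dcoord[OF dc dr]]
      pd_add[OF dcoord[OF da dtt] dcoord[OF db drr]]
      pcoord[OF a' dtt] pcoord[OF b' drr] pcoord[OF c' dr] pcoord[OF e' dlap]
    by simp
  also have "\<dots> = ?rhs"
    using pd_commute3[OF S(1) \<psi> S(2), of e_r e_t e_t] pd_r_lap_S2[OF S \<psi> sin]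
    by (simp add: a_def b_def c_def e_def divide_inverse algebra_simps)
  finally show ?thesis .
qed

theorem lemma4p1:
  fixes \<Lambda> m :: real and f :: "real \<Rightarrow> real" and \<psi> :: "pt \<Rightarrow> real"
  assumes "\<Lambda> > 0" and "0 < 3 * m" and "3 * m < 1 / sqrt \<Lambda>"
    and "Ck 2 {r_C \<Lambda> m<..} f"
    and "\<And>r. r > r_C \<Lambda> m \<Longrightarrow> f r > 0"
    and "Ck 3 (expanding_region \<Lambda> m) \<psi>"
    and "p \<in> expanding_region \<Lambda> m"
  shows "let D = D_sds \<Lambda> m; r = rad p;
             X = (\<lambda>g q. f (rad q) * pd e_r g q);
             \<phi> = 1 / sqrt (D r)
         in box_g \<Lambda> m (X \<psi>) p =
            X (box_g \<Lambda> m \<psi>) p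
            + (f r)^2 / r^2 * deriv (\<lambda>s. s^2 * D s / (f s)^2) r * pd e_r (X \<psi>) p
            + (f r)^2 / r^2 * deriv (deriv (\<lambda>s. s^2 * D s / f s)) r * pd e_r \<psi> p
            + 2 * f r * \<phi>^4 * (1 / r - 3 * m / r^2) * pd e_t (pd e_t \<psi>) p
            + 2 * f r / r * box_g \<Lambda> m \<psi> p"
proof -
  let ?S = "expanding_region \<Lambda> m" and ?D = "D_sds \<Lambda> m"
  have S: "open ?S" "p \<in> ?S"
    using open_expanding_region assms(7) by auto
  have rC: "0 < r_C \<Lambda> m"
    using r_C_pos[OF assms(1-3)] .
  have region: "rad ` ?S \<subseteq> {r_C \<Lambda> m<..}" "\<forall>q\<in>?S. rad q \<noteq> 0" "\<forall>q\<in>?S. sin (theta q) \<noteq> 0"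
    using expanding_region_coords rC by (force, fastforce, fastforce)
  define r where "r = rad p"
  have r: "r_C \<Lambda> m < r" "r \<noteq> 0"
    using region S(2) by (auto simp: r_def)
  have nz: "?D r \<noteq> 0" "f r \<noteq> 0"
    using D_sds_nonzero_beyond_r_C[OF assms(1-3) r(1)] assms(5)[OF r(1)] by auto
  have f_nonzero: "\<forall>s>r_C \<Lambda> m. f s \<noteq> 0"
    using assms(5) by force
  have f1: "(f has_real_derivative deriv f r) (at r)"
    using Ck2_real_derivatives(1)[OF assms(4) open_greaterThan] r(1) by simp
  have Xr: "pd e_r (\<lambda>q. f (rad q) * pd e_r \<psi> q) p
      = f r * pd e_r (pd e_r \<psi>) p + deriv f r * pd e_r \<psi> p"
    using pd_coord_mult[OF bounded_linear_rad f1[unfolded r_def]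
        Ck3_differentiable(2)[OF assms(6) S]]
    by (simp add: r_def)
  note lhs = box_g_rad_mult[OF S assms(6) bspec[OF region(2) S(2)] open_greaterThan region(1)
      assms(4)]
  note Xbox = pd_r_box_g[OF S assms(6) region(2,3) nz(1)[unfolded r_def]]
  note box = box_g_eq[OF Ck3_differentiable(2)[OF assms(6) S] bspec[OF region(2) S(2)]]
  note weights = deriv_r2_D_sds_div_sq[OF r(2) f1 nz(2)]
    deriv2_r2_D_sds_div[OF less_imp_le[OF rC] r(1) assms(4) f_nonzero]
  show ?thesis
    using r nz
    by (simp only: Let_def lhs Xbox box r_def[symmetric] weights Xr one_div_sqrt_pow4
        deriv_D_sds[OF r(2)])
      (simp add: field_simps, algebra)
qed

end
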